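(* Let $H,H'$ be heaps, $a$ an address, $v$ a value and $\tau$ an ownership well-formed type. If $H\approx_a H'$ and $\mathrm{own}(H,v,\tau)(a)=0$, then $\mathrm{own}(H,v,\tau)=\mathrm{own}(H',v,\tau)$.
   Context: Types $\tau ::= \{\nu:\mathtt{int}\mid\varphi\}\mid\tau\ \mathtt{ref}^r$, $\varphi$ a refinement formula, $r\in[0,1]$ rational. $\top_0=\{\nu:\mathtt{int}\mid\top\}$ and $\top_i=\top_{i-1}\ \mathtt{ref}^0$. A type is ownership well-formed if every subterm of the form $\tau'\ \mathtt{ref}^0$ has $\tau'=\top_n$ for some $n$ (the paper imposes this on all types). Values: integers or addresses; a heap is a finite partial map from addresses to values. Reachability $H\vdash v\Downarrow n$ is the smallest relation with: $v\in\mathbb Z$ implies $H\vdash v\Downarrow 0$; if $H\vdash v\Downarrow n$ and $H(a)=v$ then $H\vdash a\Downarrow n+1$. $H\approx_a H'$ iff $dom(H)=dom(H')$, $H(a')=H'(a')$ for all $a'\in dom(H)$ with $a'\neq a$, and for every $n$, $H\vdash a\Downarrow n$ iff $H'\vdash a\Downarrow n$. Ownership maps are functions from addresses to nonnegative rationals, added pointwise; $\{a\mapsto r\}$ maps $a$ to $r$ and all else to 0; $\emptyset$ is the zero map. $\mathrm{own}(H,v,\tau)=\{a\mapsto r\}+\mathrm{own}(H,H(a),\tau')$ if $v$ is an address $a\in dom(H)$ and $\tau=\tau'\ \mathtt{ref}^r$; otherwise $\emptyset$. *)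

theory Defs
  imports Complex_Main
begin

(* Refinement types. Refinement formulas are kept abstract (type parameter 'p);
   the trivial formula \<top> is the lattice top element of 'p. *)
datatype 'p ty = IntTy 'p | RefTy "'p ty" rat

fun frac_ok :: "'p ty \<Rightarrow> bool" where
  "frac_ok (IntTy _) = True"
| "frac_ok (RefTy t r) = (0 \<le> r \<and> r \<le> 1 \<and> frac_ok t)"

fun top_ty :: "nat \<Rightarrow> 'p::top ty" where
  "top_ty 0 = IntTy top"
| "top_ty (Suc n) = RefTy (top_ty n) 0"

fun own_wf :: "'p::top ty \<Rightarrow> bool" where
  "own_wf (IntTy _) = True"
| "own_wf (RefTy t r) = ((r = 0 \<longrightarrow> (\<exists>n. t = top_ty n)) \<and> own_wf t)"

datatype 'a val = IntV int | Addr 'a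

type_synonym 'a heap = "'a \<rightharpoonup> 'a val"

inductive reach :: "'a heap \<Rightarrow> 'a val \<Rightarrow> nat \<Rightarrow> bool" where
  reach_int: "reach H (IntV i) 0"
| reach_addr: "reach H v n \<Longrightarrow> H a = Some v \<Longrightarrow> reach H (Addr a) (Suc n)"

definition heap_approx :: "'a heap \<Rightarrow> 'a \<Rightarrow> 'a heap \<Rightarrow> bool" where
  "heap_approx H a H' \<longleftrightarrow>
     dom H = dom H' \<and>
     (\<forall>a'\<in>dom H. a' \<noteq> a \<longrightarrow> H a' = H' a') \<and>
     (\<forall>n. reach H (Addr a) n \<longleftrightarrow> reach H' (Addr a) n)"

fun own :: "'a heap \<Rightarrow> 'a val \<Rightarrow> 'p ty \<Rightarrow> ('a \<Rightarrow> rat)" where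
  "own H (Addr a) (RefTy t r) =
     (case H a of
        Some w \<Rightarrow> (\<lambda>x. (if x = a then r else 0) + own H w t x)
      | None \<Rightarrow> (\<lambda>_. 0))"
| "own H (IntV i) t = (\<lambda>_. 0)"
| "own H v (IntTy p) = (\<lambda>_. 0)"

end

theory Submission
  imports Defs
begin

(* Away from a the two heaps agree, so the ownership map only
   changes if the traversal reads the cell a. Reading it contributes the annotation r
   of the reference at hand to the a-entry, and all ownerships are nonnegative, so
   own(H,v,tau)(a) = 0 forces r = 0; ownership well-formedness then makes that
   reference a top type, whose ownership vanishes in every heap. *)

lemma own_nonneg:
  assumes "frac_ok t"
  shows "0 \<le> own H v t x"
  using assms
proof (induction t arbitrary: v)
  case (IntTy p)
  then show ?case by (cases v) auto
next
  case (RefTy t r)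
  then show ?case by (cases v) (auto split: option.splits)
qed

lemma own_top_ty: "own H v (top_ty n) = (\<lambda>_. 0)"
proof (induction n arbitrary: v)
  case 0
  then show ?case by (cases v) auto
next
  case (Suc n)
  then show ?case by (cases v) (auto split: option.splits)
qed

lemma own_self_eq_zero_imp_top_ty:
  assumes "frac_ok (RefTy t r)" and "own_wf (RefTy t r)"
    and "H b = Some w" and "own H (Addr b) (RefTy t r) b = 0"
  obtains n where "RefTy t r = top_ty (Suc n)"
proof -
  have "r + own H w t b = 0"
    using assms(3,4) by simp
  moreover have "0 \<le> r" and "0 \<le> own H w t b"
    using assms(1) own_nonneg by auto
  ultimately have "r = 0" by linarith
  with assms(2) that show thesis by auto
qed

lemma own_eq_if_heaps_agree_off:
  assumes "dom H = dom H'" and agree: "\<And>b. b \<noteq> a \<Longrightarrow> H b = H' b"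
    and "frac_ok \<tau>" and "own_wf \<tau>" and "own H v \<tau> a = 0"
  shows "own H v \<tau> = own H' v \<tau>"
  using assms(3-5)
proof (induction \<tau> arbitrary: v)
  case (IntTy p)
  then show ?case by (cases v) auto
next
  case (RefTy t r)
  show ?case
  proof (cases v)
    case (IntV i)
    then show ?thesis by simp
  next
    case (Addr b)
    show ?thesis
    proof (cases "H b")
      case None
      with \<open>dom H = dom H'\<close> have "H' b = None" by auto
      with None Addr show ?thesis by simp
    next
      case (Some w)
      show ?thesis
      proof (cases "b = a")
        case True
        with RefTy.prems Some Addr obtain n where "RefTy t r = top_ty (Suc n)"
          by (metis own_self_eq_zero_imp_top_ty)
        then show ?thesis by (metis own_top_ty)
      next
        case False
        with agree Some have "H' b = Some w" by metis
        moreover have "own H w t a = 0"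
          using RefTy.prems(3) Addr Some False by simp
        then have "own H w t = own H' w t"
          using RefTy.IH RefTy.prems(1,2) by simp
        ultimately show ?thesis using Addr Some by simp
      qed
    qed
  qed
qed

theorem lemma19:
  fixes H H' :: "'a heap" and a :: 'a and v :: "'a val" and \<tau> :: "'p::top ty"
  assumes "frac_ok \<tau>"
    and "own_wf \<tau>"
    and "heap_approx H a H'"
    and "own H v \<tau> a = 0"
  shows "own H v \<tau> = own H' v \<tau>"
proof (rule own_eq_if_heaps_agree_off)
  show "dom H = dom H'"
    using assms(3) unfolding heap_approx_def by blast
  show "H b = H' b" if "b \<noteq> a" for b
    using assms(3) that unfolding heap_approx_def by (metis domIff)
qed (use assms in auto)

end
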